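(* Let $m\ge1$ and $l\ge1$ be integers. Then $D_{m,l}^{-1}B^*_{k,j}(t)\in\mathbb{Z}[t]$ for all $k,j=0,1,\dots,m$.
   Context: $v_p$ is the $p$-adic valuation. $D_{m,l}=\prod_{p\le (m+1)/2,\ p\text{ prime}}p^{\mu_p v_p((l-1)!)}$ where $\mu_p=\min_{0\le j\le m}\left(\lfloor j/p\rfloor+\lfloor (m-j)/p\rfloor\right)$. For $k=0,\dots,m$ let $l^{(k)}_h=l$ for $h\ne k$ and $l^{(k)}_k=l-1$, and $L=(m+1)l-1$. For $j,k\in\{0,\dots,m\}$ define $\sigma^{(k,j)}_i$ by $\prod_{h=0}^m(h-j-w)^{l^{(k)}_h}=\sum_{i=0}^L\sigma^{(k,j)}_iw^i$, and $B^*_{k,j}(t)=\frac{1}{(l-1)!}\sum_{i=0}^{L}t^{L-i}\,i!\,\sigma^{(k,j)}_i$. *)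

theory Defs
  imports "HOL-Computational_Algebra.Computational_Algebra"
begin

definition mu_exp :: "nat \<Rightarrow> nat \<Rightarrow> nat" where
  "mu_exp m p = Min {j div p + (m - j) div p | j. j \<le> m}"

definition D_ml :: "nat \<Rightarrow> nat \<Rightarrow> nat" where
  "D_ml m l = (\<Prod>p\<in>{p. prime p \<and> 2 * p \<le> m + 1}.
                  p ^ (mu_exp m p * multiplicity p (fact (l - 1) :: nat)))"

definition lk :: "nat \<Rightarrow> nat \<Rightarrow> nat \<Rightarrow> nat" where
  "lk l k h = (if h = k then l - 1 else l)"

definition sigma_poly :: "nat \<Rightarrow> nat \<Rightarrow> nat \<Rightarrow> nat \<Rightarrow> int poly" where
  "sigma_poly m l k j = (\<Prod>h\<in>{0..m}. [: int h - int j, -1 :] ^ lk l k h)"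

definition sigma :: "nat \<Rightarrow> nat \<Rightarrow> nat \<Rightarrow> nat \<Rightarrow> nat \<Rightarrow> int" where
  "sigma m l k j i = coeff (sigma_poly m l k j) i"

definition Lbig :: "nat \<Rightarrow> nat \<Rightarrow> nat" where
  "Lbig m l = (m + 1) * l - 1"

definition Bstar :: "nat \<Rightarrow> nat \<Rightarrow> nat \<Rightarrow> nat \<Rightarrow> rat poly" where
  "Bstar m l k j = smult (1 / fact (l - 1))
     (\<Sum>i\<in>{0..Lbig m l}. monom (fact i * of_int (sigma m l k j i)) (Lbig m l - i))"

end

theory Submission
  imports Defs
begin

text \<open>
  The coefficient of \<open>t^n\<close> in \<open>B*_{k,j}\<close> is \<open>i! sigma_i / (l-1)!\<close> with \<open>i = L - n\<close>, so the
  claim is that \<open>(l-1)! D_{m,l}\<close> divides \<open>i! sigma_i\<close>. Say that \<open>N\<close> divides the factorial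
  coefficients of \<open>P\<close> if \<open>N\<close> divides \<open>i! coeff P i\<close> for every \<open>i\<close>; by the Leibniz rule
  \<open>i! (PQ)_i = \<Sum>_a (i choose a) (a! P_a) ((i-a)! Q_{i-a})\<close> this is multiplicative in \<open>(N, P)\<close>.
  Fix a prime \<open>p\<close> and let \<open>v = v_p((l-1)!)\<close>. The factor \<open>(-w)^e\<close> for \<open>h = j\<close> has \<open>e \<ge> l-1\<close> and
  contributes \<open>(l-1)!\<close>. A factor \<open>(a - w)^e\<close> with \<open>p | a\<close> contributes \<open>p^v\<close>, because
  \<open>r! (e choose r) a^(e-r) = e!/(e-r)! a^(e-r)\<close> and \<open>v_p((e-r)!) \<le> e - r\<close>. There are at least
  \<open>\<lfloor>j/p\<rfloor> + \<lfloor>(m-j)/p\<rfloor> \<ge> mu_p\<close> indices \<open>h \<noteq> j\<close> in \<open>{0..m}\<close> with \<open>h \<equiv> j (mod p)\<close>, which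
  gives \<open>(l-1)! p^(mu_p v)\<close>; the prime powers for different \<open>p\<close> are coprime.
\<close>

definition dvd_fact_coeffs :: "'a::{comm_ring_1,ring_char_0} \<Rightarrow> 'a poly \<Rightarrow> bool" where
  "dvd_fact_coeffs N P \<longleftrightarrow> (\<forall>i. N dvd fact i * coeff P i)"

lemma dvd_fact_coeffs_dvd:
  "M dvd N \<Longrightarrow> dvd_fact_coeffs N P \<Longrightarrow> dvd_fact_coeffs M P"
  unfolding dvd_fact_coeffs_def using dvd_trans by blast

lemma dvd_fact_coeffs_one [simp]: "dvd_fact_coeffs 1 P"
  by (simp add: dvd_fact_coeffs_def)

lemma fact_coeff_mult:
  fixes P Q :: "'a::{comm_ring_1,ring_char_0} poly"
  shows "fact i * coeff (P * Q) i =
    (\<Sum>a\<le>i. of_nat (i choose a) * (fact a * coeff P a) * (fact (i - a) * coeff Q (i - a)))"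
  unfolding coeff_mult sum_distrib_left
proof (rule sum.cong[OF refl])
  fix a assume "a \<in> {..i}"
  then have "of_nat (fact a * fact (i - a) * (i choose a)) = (fact i :: 'a)"
    by (simp only: binomial_fact_lemma atMost_iff of_nat_fact)
  then have "(fact i :: 'a) = of_nat (i choose a) * fact a * fact (i - a)"
    by (simp add: ac_simps)
  then show "fact i * (coeff P a * coeff Q (i - a)) =
      of_nat (i choose a) * (fact a * coeff P a) * (fact (i - a) * coeff Q (i - a))"
    by (simp add: ac_simps)
qed

lemma dvd_fact_coeffs_mult:
  assumes "dvd_fact_coeffs M P" "dvd_fact_coeffs N Q"
  shows "dvd_fact_coeffs (M * N) (P * Q)"
  unfolding dvd_fact_coeffs_def fact_coeff_mult
proof (intro allI dvd_sum)
  fix i a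
  have "M * N dvd (fact a * coeff P a) * (fact (i - a) * coeff Q (i - a))"
    using assms unfolding dvd_fact_coeffs_def by (intro mult_dvd_mono) auto
  then show "M * N dvd of_nat (i choose a) * (fact a * coeff P a) * (fact (i - a) * coeff Q (i - a))"
    by (metis dvd_mult mult.assoc)
qed

lemma dvd_fact_coeffs_prod:
  "finite A \<Longrightarrow> (\<And>h. h \<in> A \<Longrightarrow> dvd_fact_coeffs (N h) (P h)) \<Longrightarrow>
    dvd_fact_coeffs (\<Prod>h\<in>A. N h) (\<Prod>h\<in>A. P h)"
  by (induction A rule: finite_induct) (auto intro: dvd_fact_coeffs_mult)

lemma dvd_fact_coeffs_linear_power:
  fixes a c :: "'a::{comm_ring_1,ring_char_0}"
  assumes "\<And>r. r \<le> e \<Longrightarrow> N dvd fact r * of_nat (e choose r) * a ^ (e - r)"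
  shows "dvd_fact_coeffs N ([:a, c:] ^ e)"
  unfolding dvd_fact_coeffs_def
proof
  fix i
  show "N dvd fact i * coeff ([:a, c:] ^ e) i"
  proof (cases "i \<le> e")
    case True
    then have "fact i * coeff ([:a, c:] ^ e) i = c ^ i * (fact i * of_nat (e choose i) * a ^ (e - i))"
      by (simp add: coeff_linear_poly_power ac_simps)
    then show ?thesis using assms True by (metis dvd_mult)
  next
    case False
    have "degree ([:a, c:] ^ e) \<le> e"
      by (rule order.trans[OF degree_power_le]) simp
    with False show ?thesis by (simp add: coeff_eq_0)
  qed
qed

lemma dvd_fact_coeffs_monomial_power:
  fixes c :: "'a::{comm_ring_1,ring_char_0}"
  assumes "n \<le> e"
  shows "dvd_fact_coeffs (fact n) ([:0, c:] ^ e)"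
proof (rule dvd_fact_coeffs_linear_power)
  fix r assume "r \<le> e"
  then consider "r = e" | "r < e" by linarith
  then show "fact n dvd fact r * of_nat (e choose r) * (0::'a) ^ (e - r)"
  proof cases
    case 1
    have "fact n dvd (fact e :: nat)" using assms by (rule fact_dvd)
    then obtain q :: nat where "fact e = fact n * q" ..
    then have "(fact e :: 'a) = fact n * of_nat q"
      by (metis of_nat_fact of_nat_mult)
    then show ?thesis using 1 by simp
  qed (simp add: zero_power)
qed

lemma fact_eq_prime_power_mult:
  fixes p :: nat
  assumes "prime p"
  shows "\<exists>u. fact s = p ^ (s div p) * fact (s div p) * u \<and> \<not> p dvd u"
proof (induction s)
  case 0
  show ?case using assms by (intro exI[of _ 1]) auto
next
  case (Suc s)
  then obtain u where u: "fact s = p ^ (s div p) * fact (s div p) * u" "\<not> p dvd u"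
    by blast
  show ?case
  proof (cases "p dvd Suc s")
    case True
    then have q: "Suc s div p = Suc (s div p)"
      by (simp add: div_Suc)
    with True have "Suc s = p * Suc (s div p)"
      by (metis dvd_mult_div_cancel)
    have "fact (Suc s) = Suc s * fact s" by simp
    also have "\<dots> = p * Suc (s div p) * (p ^ (s div p) * fact (s div p) * u)"
      using u(1) \<open>Suc s = p * Suc (s div p)\<close> by (simp only:)
    also have "\<dots> = p ^ Suc (s div p) * (Suc (s div p) * fact (s div p)) * u"
      by (simp add: algebra_simps)
    also have "\<dots> = p ^ (Suc s div p) * fact (Suc s div p) * u"
      using q by (simp only: fact_Suc) simp
    finally show ?thesis using u(2) by blast
  next
    case False
    then have "Suc s div p = s div p"
      by (simp add: div_Suc dvd_eq_mod_eq_0)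
    then have "fact (Suc s) = p ^ (Suc s div p) * fact (Suc s div p) * (u * Suc s)"
      using u(1) by (simp add: algebra_simps)
    moreover have "\<not> p dvd u * Suc s"
      using False u(2) assms prime_dvd_mult_iff by blast
    ultimately show ?thesis by blast
  qed
qed

lemma multiplicity_fact_prime:
  fixes p :: nat
  assumes "prime p"
  shows "multiplicity p (fact s) = s div p + multiplicity p (fact (s div p))"
proof -
  obtain u where u: "fact s = p ^ (s div p) * fact (s div p) * u" "\<not> p dvd u"
    using fact_eq_prime_power_mult[OF assms] by blast
  then have "u \<noteq> 0" by (metis dvd_0_right)
  then show ?thesis
    using assms u by (simp add: prime_elem_multiplicity_mult_distrib not_dvd_imp_multiplicity_0)
qed

lemma multiplicity_fact_le:
  fixes p :: nat
  assumes "prime p"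
  shows "multiplicity p (fact s) \<le> s"
proof (induction s rule: less_induct)
  case (less s)
  show ?case
  proof (cases "s = 0")
    case False
    have "2 \<le> p" using assms by (rule prime_ge_2_nat)
    then have "s div p < s" and "2 * (s div p) \<le> s"
      using False by (auto intro: order.trans[OF _ div_times_less_eq_dividend]
          order.trans[OF mult_le_mono1 times_div_less_eq_dividend])
    then show ?thesis using less multiplicity_fact_prime[OF assms, of s] by fastforce
  qed simp
qed

lemma prime_power_dvd_binomial_term:
  fixes p :: nat and a :: int
  assumes p: "prime p" and "int p dvd a" and "r \<le> n"
  shows "int p ^ multiplicity p (fact n) dvd fact r * int (n choose r) * a ^ (n - r)"
proof -
  define X :: nat where "X = fact r * (n choose r)"
  have "X * fact (n - r) = fact n"
    unfolding X_def using binomial_fact_lemma[OF \<open>r \<le> n\<close>] by (simp add: ac_simps)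
  moreover have "X \<noteq> 0" unfolding X_def using \<open>r \<le> n\<close> by simp
  ultimately have "multiplicity p (fact n) = multiplicity p X + multiplicity p (fact (n - r))"
    using p by (metis fact_nonzero prime_elem_multiplicity_mult_distrib prime_imp_prime_elem)
  then have "p ^ multiplicity p (fact n) dvd X * p ^ multiplicity p (fact (n - r))"
    by (simp add: power_add mult_dvd_mono multiplicity_dvd)
  also have "\<dots> dvd X * p ^ (n - r)"
    using multiplicity_fact_le[OF p] by (simp add: le_imp_power_dvd)
  finally have "int p ^ multiplicity p (fact n) dvd int X * int p ^ (n - r)"
    by (metis of_nat_dvd_iff of_nat_mult of_nat_power)
  also have "\<dots> dvd int X * a ^ (n - r)"
    using \<open>int p dvd a\<close> by (simp add: dvd_power_same)
  finally show ?thesis unfolding X_def by simp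
qed

lemma div_le_card_multiples_above:
  fixes p :: nat
  assumes "0 < p"
  shows "(m - j) div p \<le> card {h. j < h \<and> h \<le> m \<and> p dvd h - j}"
proof -
  have "card {1..(m - j) div p} \<le> card {h. j < h \<and> h \<le> m \<and> p dvd h - j}"
  proof (rule card_inj_on_le[of "\<lambda>t. j + p * t"])
    show "inj_on (\<lambda>t. j + p * t) {1..(m - j) div p}"
      using assms by (auto simp: inj_on_def)
    show "(\<lambda>t. j + p * t) ` {1..(m - j) div p} \<subseteq> {h. j < h \<and> h \<le> m \<and> p dvd h - j}"
    proof (intro image_subsetI CollectI conjI)
      fix t assume t: "t \<in> {1..(m - j) div p}"
      then have "p * t \<le> m - j" "0 < p * t"
        using order.trans[OF mult_le_mono2 times_div_less_eq_dividend] assms by auto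
      then show "j < j + p * t" "j + p * t \<le> m" by linarith+
      show "p dvd j + p * t - j" by simp
    qed
  qed auto
  then show ?thesis by simp
qed

lemma div_le_card_multiples_below:
  fixes p :: nat
  assumes "0 < p"
  shows "j div p \<le> card {h. h < j \<and> p dvd j - h}"
proof -
  have le: "p * t \<le> j" if "t \<le> j div p" for t
    using that order.trans[OF mult_le_mono2 times_div_less_eq_dividend] by blast
  have "card {1..j div p} \<le> card {h. h < j \<and> p dvd j - h}"
  proof (rule card_inj_on_le[of "\<lambda>t. j - p * t"])
    show "inj_on (\<lambda>t. j - p * t) {1..j div p}"
    proof (rule inj_onI)
      fix x y assume "x \<in> {1..j div p}" "y \<in> {1..j div p}" "j - p * x = j - p * y"
      with le have "p * x = p * y" by (metis atLeastAtMost_iff diff_diff_cancel)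
      with assms show "x = y" by simp
    qed
    show "(\<lambda>t. j - p * t) ` {1..j div p} \<subseteq> {h. h < j \<and> p dvd j - h}"
    proof (intro image_subsetI CollectI conjI)
      fix t assume t: "t \<in> {1..j div p}"
      then have "p * t \<le> j" "0 < p * t" using le assms by auto
      then show "j - p * t < j" "p dvd j - (j - p * t)" by (linarith, simp)
    qed
  qed auto
  then show ?thesis by simp
qed

lemma div_add_div_le_card_congruent:
  fixes p :: nat
  assumes "0 < p" and "j \<le> m"
  shows "j div p + (m - j) div p \<le> card {h\<in>{0..m}. h \<noteq> j \<and> int p dvd int h - int j}"
proof -
  let ?below = "{h. h < j \<and> p dvd j - h}" and ?above = "{h. j < h \<and> h \<le> m \<and> p dvd h - j}"
  have "int p dvd int h - int j" if "h < j \<and> p dvd j - h \<or> j < h \<and> p dvd h - j" for h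
    using that
  proof (elim disjE conjE dvdE)
    fix c assume "h < j" "j - h = p * c"
    then have "int h - int j = int p * - int c" by (simp add: of_nat_diff flip: of_nat_mult)
    then show ?thesis by simp
  next
    fix c assume "j < h" "h - j = p * c"
    then have "int h - int j = int p * int c" by (simp add: of_nat_diff flip: of_nat_mult)
    then show ?thesis by simp
  qed
  then have "?below \<union> ?above \<subseteq> {h\<in>{0..m}. h \<noteq> j \<and> int p dvd int h - int j}"
    using assms by auto
  then have "card (?below \<union> ?above) \<le> card {h\<in>{0..m}. h \<noteq> j \<and> int p dvd int h - int j}"
    by (intro card_mono) auto
  moreover have "card (?below \<union> ?above) = card ?below + card ?above"
    by (rule card_Un_disjoint) auto
  ultimately show ?thesis
    using div_le_card_multiples_above[OF assms(1), of m j]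
      div_le_card_multiples_below[OF assms(1), of j] by linarith
qed

lemma mu_exp_le: "j \<le> m \<Longrightarrow> mu_exp m p \<le> j div p + (m - j) div p"
  unfolding mu_exp_def by (intro Min_le) auto

lemma dvd_fact_coeffs_prime_power_linear_power:
  fixes a c :: int
  assumes p: "prime p" and "int p dvd a" and "n \<le> e"
  shows "dvd_fact_coeffs (int p ^ multiplicity p (fact n)) ([:a, c:] ^ e)"
proof (rule dvd_fact_coeffs_linear_power)
  fix r assume "r \<le> e"
  have "multiplicity p (fact n) \<le> multiplicity p (fact e)"
    using \<open>n \<le> e\<close> by (intro dvd_imp_multiplicity_le fact_dvd) auto
  then have "int p ^ multiplicity p (fact n) dvd int p ^ multiplicity p (fact e)"
    by (rule le_imp_power_dvd)
  also have "\<dots> dvd fact r * of_nat (e choose r) * a ^ (e - r)"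
    using prime_power_dvd_binomial_term[OF assms(1,2) \<open>r \<le> e\<close>] by simp
  finally show "int p ^ multiplicity p (fact n) dvd fact r * of_nat (e choose r) * a ^ (e - r)" .
qed

lemma dvd_fact_coeffs_shifted_product:
  fixes p j m n :: nat and e :: "nat \<Rightarrow> nat"
  assumes p: "prime p" and "j \<le> m" and e: "\<And>h. n \<le> e h"
  shows "dvd_fact_coeffs (fact n * int p ^ (mu_exp m p * multiplicity p (fact n)))
           (\<Prod>h\<in>{0..m}. [:int h - int j, -1:] ^ e h)"
proof -
  define v where "v = multiplicity p (fact n)"
  define A where "A = {h\<in>{0..m}. h \<noteq> j \<and> int p dvd int h - int j}"
  define N where "N h = (if h = j then fact n else if h \<in> A then int p ^ v else 1)" for h
  have "dvd_fact_coeffs (N h) ([:int h - int j, -1:] ^ e h)" for h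
    using dvd_fact_coeffs_monomial_power[OF e]
      dvd_fact_coeffs_prime_power_linear_power[OF p _ e]
    by (auto simp: N_def A_def v_def)
  then have good: "dvd_fact_coeffs (\<Prod>h\<in>{0..m}. N h) (\<Prod>h\<in>{0..m}. [:int h - int j, -1:] ^ e h)"
    by (intro dvd_fact_coeffs_prod) auto
  have "(\<Prod>h\<in>{0..m}. N h) = N j * (\<Prod>h\<in>{0..m} - {j}. N h)"
    using \<open>j \<le> m\<close> by (subst prod.remove[of _ j]) auto
  also have "(\<Prod>h\<in>{0..m} - {j}. N h) = (\<Prod>h\<in>A. N h)"
    by (rule prod.mono_neutral_right) (auto simp: A_def N_def)
  also have "\<dots> = (\<Prod>h\<in>A. int p ^ v)"
    by (rule prod.cong) (auto simp: A_def N_def)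
  finally have "(\<Prod>h\<in>{0..m}. N h) = fact n * int p ^ (v * card A)"
    by (simp add: N_def power_mult mult.commute)
  moreover have "mu_exp m p \<le> card A"
    using mu_exp_le[OF \<open>j \<le> m\<close>, of p] div_add_div_le_card_congruent[of p j m]
      \<open>j \<le> m\<close> prime_gt_0_nat[OF p] unfolding A_def by linarith
  then have "fact n * int p ^ (mu_exp m p * v) dvd fact n * int p ^ (v * card A)"
    by (intro mult_dvd_mono le_imp_power_dvd) auto
  ultimately show ?thesis
    using dvd_fact_coeffs_dvd[OF _ good] unfolding v_def by simp
qed

lemma prod_prime_powers_dvd:
  fixes y :: int
  assumes "finite S" "\<And>p. p \<in> S \<Longrightarrow> prime p" "\<And>p. p \<in> S \<Longrightarrow> int p ^ e p dvd y"
  shows "(\<Prod>p\<in>S. int p ^ e p) dvd y"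
  using assms
proof (induction S rule: finite_induct)
  case (insert q S)
  have "coprime (int q ^ e q) (\<Prod>p\<in>S. int p ^ e p)"
  proof (rule prod_coprime_right)
    fix p assume "p \<in> S"
    with insert have "coprime q p" by (intro primes_coprime) auto
    then show "coprime (int q ^ e q) (int p ^ e p)" by simp
  qed
  with insert show ?case by (simp add: divides_mult)
qed simp

lemma fact_prime_power_dvd_fact_sigma:
  assumes "prime p" and "j \<le> m"
  shows "fact (l - 1) * int p ^ (mu_exp m p * multiplicity p (fact (l - 1))) dvd
           fact i * sigma m l k j i"
  using dvd_fact_coeffs_shifted_product[OF assms, of "l - 1" "lk l k"]
  unfolding dvd_fact_coeffs_def sigma_def sigma_poly_def lk_def by auto

lemma D_ml_fact_dvd_fact_sigma:
  assumes "j \<le> m"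
  shows "int (D_ml m l) * fact (l - 1) dvd fact i * sigma m l k j i"
proof -
  define S where "S = {p. prime p \<and> 2 * p \<le> m + 1}"
  define e where "e p = mu_exp m p * multiplicity p (fact (l - 1) :: nat)" for p
  obtain y where y: "fact i * sigma m l k j i = fact (l - 1) * y"
    using fact_prime_power_dvd_fact_sigma[OF two_is_prime_nat assms] dvd_mult_left by blast
  have "(\<Prod>p\<in>S. int p ^ e p) dvd y"
  proof (rule prod_prime_powers_dvd)
    show "finite S" unfolding S_def by (rule finite_subset[of _ "{..m + 1}"]) auto
    fix p assume "p \<in> S"
    then have "prime p" unfolding S_def by simp
    then show "int p ^ e p dvd y"
      using fact_prime_power_dvd_fact_sigma[of p j m l i k] assms unfolding y e_def by simp
  qed (simp add: S_def)
  moreover have "int (D_ml m l) = (\<Prod>p\<in>S. int p ^ e p)"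
    unfolding D_ml_def S_def e_def by simp
  ultimately show ?thesis using y by (simp add: mult.commute)
qed

lemma coeff_Bstar:
  "coeff (Bstar m l k j) n =
     (if n \<le> Lbig m l
      then of_int (fact (Lbig m l - n) * sigma m l k j (Lbig m l - n)) / fact (l - 1) else 0)"
proof -
  have "coeff (\<Sum>i\<in>{0..Lbig m l}. monom (fact i * of_int (sigma m l k j i) :: rat) (Lbig m l - i)) n
      = (\<Sum>i\<in>{0..Lbig m l}. if i = Lbig m l - n \<and> n \<le> Lbig m l
                               then of_int (fact i * sigma m l k j i) else 0)"
    unfolding coeff_sum by (rule sum.cong) (auto simp: coeff_monom)
  then show ?thesis unfolding Bstar_def by (simp add: sum.delta)
qed

theorem corollary6p3:
  fixes m l :: nat
  assumes "m \<ge> 1" and "l \<ge> 1"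
  shows "\<forall>k\<in>{0..m}. \<forall>j\<in>{0..m}. \<forall>n.
           coeff (smult (1 / of_nat (D_ml m l)) (Bstar m l k j)) n \<in> \<int>"
proof (intro ballI allI)
  fix k j n assume "j \<in> {0..m}"
  define i where "i = Lbig m l - n"
  obtain z where z: "fact i * sigma m l k j i = int (D_ml m l) * fact (l - 1) * z"
    using D_ml_fact_dvd_fact_sigma[of j m l i k] \<open>j \<in> {0..m}\<close> by auto
  have "D_ml m l > 0"
    unfolding D_ml_def by (intro prod_pos) (simp add: prime_gt_0_nat)
  then show "coeff (smult (1 / of_nat (D_ml m l)) (Bstar m l k j)) n \<in> \<int>"
    unfolding coeff_smult coeff_Bstar i_def[symmetric] z by simp
qed

end
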